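(* Let $T$ satisfy the general-arrival assumptions (A1)–(A5), let $S_1,S_2,\dots$ be i.i.d. nonnegative with $\mathbb E[S_1^2]<\infty$, $\beta\in\mathbb R$, $D_j:=\frac{S_j}{n}(1+\beta n^{-1/3})$, $\Sigma_k:=\sum_{j=1}^kD_j$. Then for every $t>0$, as $n\to\infty$, $$\sup_{1\le k\le tn^{2/3}} n^{4/3}\,\mathbb E\big[|F_T(\Sigma_k)-F_T(\Sigma_{k-1})-f_T(\Sigma_{k-1})D_k|\,\big|\,\Sigma_{k-1}\big]\xrightarrow{\mathbb P}0,$$ $$\sup_{1\le k\le tn^{2/3}} n^{2}\,\mathbb E\big[|D_k(F_T(\Sigma_k)-F_T(\Sigma_{k-1})-f_T(\Sigma_{k-1})D_k)|\,\big|\,\Sigma_{k-1}\big]\xrightarrow{\mathbb P}0,$$ $$\sup_{1\le k\le tn^{2/3}} n^{2}\,\mathbb E\big[|F_T(\Sigma_k)-F_T(\Sigma_{k-1})-f_T(\Sigma_{k-1})D_k|^2\,\big|\,\Sigma_{k-1}\big]\xrightarrow{\mathbb P}0.$$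
   Context: General-arrival assumptions on the distribution function $F_T$ of $T$: (A1) $T$ has a positive continuous density $f_T$ on $[0,\infty)$ with $f_T(0)\in(0,\infty)$; (A2) for every $\bar x\in(0,\infty)$, $F_T(x)-F_T(\bar x)=f_T(\bar x)(x-\bar x)+o(|x-\bar x|^{4/3})$ as $x\to\bar x$; (A3) for every $C>0$, $\sup_{\bar x\le Cy^{1/3}}|F_T(\bar x+y)-F_T(\bar x)-f_T(\bar x)y|=o(y)$ as $y\downarrow0$; (A4) $f_T'$ exists and is continuous in a neighbourhood of $0$; (A5) $f_T(0)=\sup_{x\ge0}f_T(x)$. *)

theory Defs
  imports "HOL-Probability.Probability" "HOL-Library.Landau_Symbols"
begin

definition general_arrival :: "(real \<Rightarrow> real) \<Rightarrow> (real \<Rightarrow> real) \<Rightarrow> bool" where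
  "general_arrival F f \<longleftrightarrow>
     \<comment> \<open>(A1): T has a positive continuous density f on [0,inf), F its distribution function\<close>
     (\<forall>x\<ge>0. f x > 0) \<and> continuous_on {0..} f \<and> (f has_integral 1) {0..} \<and>
     (\<forall>x. F x = (if x < 0 then 0 else integral {0..x} f)) \<and>
     \<comment> \<open>(A2)\<close>
     (\<forall>xb>0. (\<lambda>x. F x - F xb - f xb * (x - xb)) \<in> o[at xb](\<lambda>x. \<bar>x - xb\<bar> powr (4/3))) \<and>
     \<comment> \<open>(A3): sup over 0 <= xb <= C y^(1/3) is o(y) as y goes to 0 from the right\<close>
     (\<forall>C>0. \<forall>\<epsilon>>0. eventually (\<lambda>y. \<forall>xb\<in>{0..C * y powr (1/3)}.
         \<bar>F (xb + y) - F xb - f xb * y\<bar> \<le> \<epsilon> * y) (at_right 0)) \<and>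
     \<comment> \<open>(A4): f' exists and is continuous on a neighbourhood [0,delta) of 0 in [0,inf)\<close>
     (\<exists>\<delta>>0. \<exists>f'. (\<forall>x\<in>{0..<\<delta>}. (f has_real_derivative f' x) (at x within {0..}))
                  \<and> continuous_on {0..<\<delta>} f') \<and>
     \<comment> \<open>(A5)\<close>
     (\<forall>x\<ge>0. f x \<le> f 0)"

definition Dn :: "real \<Rightarrow> (nat \<Rightarrow> 'a \<Rightarrow> real) \<Rightarrow> nat \<Rightarrow> nat \<Rightarrow> 'a \<Rightarrow> real" where
  "Dn \<beta> S n j \<omega> = S j \<omega> / real n * (1 + \<beta> * real n powr (-1/3))"

definition Sigman :: "real \<Rightarrow> (nat \<Rightarrow> 'a \<Rightarrow> real) \<Rightarrow> nat \<Rightarrow> nat \<Rightarrow> 'a \<Rightarrow> real" where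
  "Sigman \<beta> S n k \<omega> = (\<Sum>j\<in>{1..k}. Dn \<beta> S n j \<omega>)"

definition cond_exp_given :: "'a measure \<Rightarrow> ('a \<Rightarrow> real) \<Rightarrow> ('a \<Rightarrow> real) \<Rightarrow> 'a \<Rightarrow> real" where
  "cond_exp_given M X Y = real_cond_exp M (vimage_algebra (space M) X borel) Y"

definition sup_to_zero_in_prob :: "'a measure \<Rightarrow> real \<Rightarrow> (nat \<Rightarrow> nat \<Rightarrow> 'a \<Rightarrow> real) \<Rightarrow> bool" where
  "sup_to_zero_in_prob M t Z \<longleftrightarrow>
     (\<forall>\<epsilon>>0. (\<lambda>n. measure M {\<omega>\<in>space M. \<exists>k. 1 \<le> k \<and> real k \<le> t * real n powr (2/3)
                                        \<and> \<bar>Z n k \<omega>\<bar> > \<epsilon>}) \<longlonglongrightarrow> 0)"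

end

theory Submission
  imports Defs "HOL-Real_Asymp.Real_Asymp"
begin

text \<open>Let R_k = F(Sigma_k) - F(Sigma_{k-1}) - f(Sigma_{k-1}) D_k. Since 0 < f <= f(0), always
  |R_k| <= f(0) D_k, and since f is Lipschitz near 0 there are delta, K with |R_k| <= K D_k^2
  whenever Sigma_{k-1} <= delta. This event is Sigma_{k-1}-measurable, so on it the three
  conditional expectations are bounded by expectations of functions of S_k, which is independent
  of Sigma_{k-1}. As D_k ~ S_k / n, these bounds are O(n^-2) for the first claim and o(n^-2) for
  the other two, the latter by dominated convergence applied to min(S^2, S^3 / n). Since the
  partial sums increase, all k <= t n^(2/3) are covered once Sigma_{floor(t n^(2/3))} < delta, and
  the complementary event has probability O(n^(-1/3)) by Markov's inequality.\<close>

lemma (in prob_space) sigma_finite_subalgebra_vimage_algebra: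
  assumes "X \<in> borel_measurable M"
  shows "sigma_finite_subalgebra M (vimage_algebra (space M) X borel)"
proof (rule finite_measure_subalgebra_is_sigma_finite, unfold_locales)
  show "subalgebra M (vimage_algebra (space M) X borel)"
    unfolding subalgebra_def using assms
    by (auto simp: sets_vimage_algebra2 measurable_sets)
qed

lemma (in sigma_finite_subalgebra) real_cond_exp_nonneg_not_measurable:
  assumes "\<And>x. 0 \<le> h x" "h \<notin> borel_measurable M"
  shows "AE x in M. real_cond_exp M F h x = 0"
proof -
  have "(\<lambda>x. ennreal (h x)) \<notin> borel_measurable M"
  proof
    assume "(\<lambda>x. ennreal (h x)) \<in> borel_measurable M"
    then have "(\<lambda>x. enn2real (ennreal (h x))) \<in> borel_measurable M" by measurable
    with assms show False by simp
  qed
  moreover have "(\<lambda>x. ennreal (- h x)) = (\<lambda>x. 0)"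
    using assms(1) by (simp add: ennreal_neg)
  moreover have "AE x in M. (0::ennreal) = nn_cond_exp M F (\<lambda>x. 0) x"
    by (rule nn_cond_exp_F_meas) auto
  ultimately show ?thesis
    unfolding real_cond_exp_def by (auto simp: nn_cond_exp_def)
qed

text \<open>\<open>h\<close> need not be measurable: otherwise its conditional expectation is the junk value 0.\<close>

lemma (in sigma_finite_subalgebra) real_cond_exp_mono_on:
  assumes "\<And>x. 0 \<le> h x" "integrable M H" "AE x in M. h x \<le> H x"
    and "integrable M g" "AE x in M. 0 \<le> g x"
    and "A \<in> sets F" "AE x in M. x \<in> A \<longrightarrow> h x \<le> g x"
  shows "AE x in M. 0 \<le> real_cond_exp M F h x
           \<and> (x \<in> A \<longrightarrow> real_cond_exp M F h x \<le> real_cond_exp M F g x)"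
proof (cases "h \<in> borel_measurable M")
  case False
  have "AE x in M. real_cond_exp M F h x = 0"
    by (rule real_cond_exp_nonneg_not_measurable[OF assms(1) False])
  moreover have "AE x in M. 0 \<le> real_cond_exp M F g x"
    using assms(4,5) by (intro real_cond_exp_pos) auto
  ultimately show ?thesis by auto
next
  case h_meas: True
  have h_int: "integrable M h"
    using assms(1-3) h_meas by (intro Bochner_Integration.integrable_bound[OF assms(2)]) auto
  have A_F: "indicator A \<in> borel_measurable F"
    using assms(6) by simp
  have A_int: "integrable M (\<lambda>x. indicator A x * h x)"
    using integrable_mult_indicator[OF _ h_int] assms(6) subalg
    by (auto simp: subalgebra_def)
  have "AE x in M. real_cond_exp M F (\<lambda>x. indicator A x * h x) x
      = indicator A x * real_cond_exp M F h x"
    by (rule real_cond_exp_mult[OF A_F h_meas A_int])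
  moreover have "AE x in M. real_cond_exp M F (\<lambda>x. indicator A x * h x) x \<le> real_cond_exp M F g x"
    using assms(1,5,7) by (intro real_cond_exp_mono[OF _ A_int assms(4)]) (auto simp: indicator_def)
  moreover have "AE x in M. 0 \<le> real_cond_exp M F h x"
    using h_meas assms(1) by (intro real_cond_exp_pos) auto
  ultimately show ?thesis by (auto simp: indicator_def)
qed

lemma (in prob_space) real_cond_exp_indep_var:
  fixes X Y :: "'a \<Rightarrow> real"
  assumes indep: "indep_var borel X borel Y"
    and G: "G \<in> borel_measurable borel" "integrable M (\<lambda>\<omega>. G (Y \<omega>))"
  shows "AE \<omega> in M. real_cond_exp M (vimage_algebra (space M) X borel) (\<lambda>\<omega>. G (Y \<omega>)) \<omega>
      = (\<integral>\<omega>. G (Y \<omega>) \<partial>M)"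
proof -
  have [measurable]: "X \<in> borel_measurable M" "Y \<in> borel_measurable M"
    using indep_var_rv1[OF indep] indep_var_rv2[OF indep] by auto
  interpret sigma_finite_subalgebra M "vimage_algebra (space M) X borel"
    by (rule sigma_finite_subalgebra_vimage_algebra) simp
  show ?thesis
  proof (rule real_cond_exp_charact)
    fix A assume "A \<in> sets (vimage_algebra (space M) X borel)"
    then obtain B where B: "B \<in> sets borel" "A = X -` B \<inter> space M"
      by (auto simp: sets_vimage_algebra2)
    have indA: "indicator A \<omega> = indicator B (X \<omega>)" if "\<omega> \<in> space M" for \<omega>
      using B that by (simp add: indicator_def)
    have "indep_var borel (\<lambda>\<omega>. indicator B (X \<omega>) :: real) borel (\<lambda>\<omega>. G (Y \<omega>))"
      using indep_var_compose[OF indep, of "indicator B" borel G borel] B G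
      by (simp add: comp_def)
    then have "(\<integral>\<omega>. indicator B (X \<omega>) * G (Y \<omega>) \<partial>M)
        = (\<integral>\<omega>. indicator B (X \<omega>) \<partial>M) * (\<integral>\<omega>. G (Y \<omega>) \<partial>M)"
      using B G by (intro indep_var_lebesgue_integral) (auto intro!: integrable_const_bound[where B=1])
    moreover have "(\<integral>\<omega>. indicator B (X \<omega>) * G (Y \<omega>) \<partial>M) = (\<integral>\<omega>\<in>A. G (Y \<omega>) \<partial>M)"
      unfolding set_lebesgue_integral_def by (rule Bochner_Integration.integral_cong) (simp_all add: indA)
    moreover have "A \<in> sets M"
      using B by (simp add: measurable_sets)
    moreover have "(\<integral>\<omega>. indicator B (X \<omega>) \<partial>M) = (\<integral>\<omega>. indicator A \<omega> \<partial>M :: real)"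
      by (rule Bochner_Integration.integral_cong) (simp_all add: indA)
    ultimately show "(\<integral>\<omega>\<in>A. G (Y \<omega>) \<partial>M) = (\<integral>\<omega>\<in>A. (\<integral>\<omega>. G (Y \<omega>) \<partial>M) \<partial>M)"
      by (simp add: set_lebesgue_integral_def integral_indicator)
  qed (use G in auto)
qed

lemma tendsto_integral_min_square_cube:
  fixes X :: "'a \<Rightarrow> real"
  assumes X: "X \<in> borel_measurable M" "integrable M (\<lambda>x. (X x)\<^sup>2)"
    and r: "r \<longlonglongrightarrow> 0" "\<And>n. 0 \<le> r n" and "0 \<le> a"
  shows "(\<lambda>n. \<integral>x. min (a * (X x)\<^sup>2) (r n * \<bar>X x\<bar> ^ 3) \<partial>M) \<longlonglongrightarrow> 0"
proof -
  have "(\<lambda>n. \<integral>x. min (a * (X x)\<^sup>2) (r n * \<bar>X x\<bar> ^ 3) \<partial>M) \<longlonglongrightarrow> (\<integral>x. 0 \<partial>M)"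
  proof (rule integral_dominated_convergence[where w="\<lambda>x. a * (X x)\<^sup>2"])
    show "AE x in M. (\<lambda>n. min (a * (X x)\<^sup>2) (r n * \<bar>X x\<bar> ^ 3)) \<longlonglongrightarrow> 0"
    proof (rule AE_I2)
      fix x
      have "(\<lambda>n. min (a * (X x)\<^sup>2) (r n * \<bar>X x\<bar> ^ 3)) \<longlonglongrightarrow> min (a * (X x)\<^sup>2) (0 * \<bar>X x\<bar> ^ 3)"
        by (intro tendsto_intros r)
      then show "(\<lambda>n. min (a * (X x)\<^sup>2) (r n * \<bar>X x\<bar> ^ 3)) \<longlonglongrightarrow> 0"
        using \<open>0 \<le> a\<close> by (simp add: min_absorb2)
    qed
  qed (use X r \<open>0 \<le> a\<close> in auto)
  then show ?thesis by simp
qed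

lemma general_arrival_increment:
  assumes "general_arrival F f" "0 \<le> x" "0 \<le> y"
  shows "F (x + y) - F x = integral {x..x + y} f"
proof -
  from assms(1) have f_cont: "continuous_on {0..} f"
    and F_eq: "\<And>x. F x = (if x < 0 then 0 else integral {0..x} f)"
    unfolding general_arrival_def by auto
  have "f integrable_on {0..x + y}"
    by (rule integrable_continuous_interval, rule continuous_on_subset[OF f_cont]) auto
  then have "integral {0..x} f + integral {x..x + y} f = integral {0..x + y} f"
    using assms by (intro Henstock_Kurzweil_Integration.integral_combine) auto
  then show ?thesis
    using assms by (simp add: F_eq)
qed

lemma integral_bounds_real:
  fixes g :: "real \<Rightarrow> real"
  assumes "g integrable_on {a..b}" "a \<le> b" "\<And>s. s \<in> {a..b} \<Longrightarrow> c \<le> g s \<and> g s \<le> d"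
  shows "c * (b - a) \<le> integral {a..b} g \<and> integral {a..b} g \<le> d * (b - a)"
proof
  have "integral {a..b} (\<lambda>_. c) \<le> integral {a..b} g"
    using assms by (intro integral_le) auto
  then show "c * (b - a) \<le> integral {a..b} g"
    using assms(2) by (simp add: mult.commute)
  have "integral {a..b} g \<le> integral {a..b} (\<lambda>_. d)"
    using assms by (intro integral_le) auto
  then show "integral {a..b} g \<le> d * (b - a)"
    using assms(2) by (simp add: mult.commute)
qed

lemma general_arrival_error_le_oscillation:
  assumes "general_arrival F f" "0 \<le> x" "0 \<le> y" "\<And>s. s \<in> {x..x + y} \<Longrightarrow> \<bar>f s - f x\<bar> \<le> L"
  shows "\<bar>F (x + y) - F x - f x * y\<bar> \<le> L * y"
proof -
  have "continuous_on {0..} f"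
    using assms(1) unfolding general_arrival_def by auto
  then have "f integrable_on {x..x + y}"
    by (intro integrable_continuous_interval) (rule continuous_on_subset, use assms in auto)
  then have "(f x - L) * y \<le> integral {x..x + y} f \<and> integral {x..x + y} f \<le> (f x + L) * y"
    using integral_bounds_real[of f x "x + y" "f x - L" "f x + L"] assms(3,4) by fastforce
  then show ?thesis
    using general_arrival_increment[OF assms(1-3)] by (auto simp: algebra_simps)
qed

lemma general_arrival_error_le_linear:
  assumes "general_arrival F f" "0 \<le> x" "0 \<le> y"
  shows "\<bar>F (x + y) - F x - f x * y\<bar> \<le> f 0 * y"
proof (rule general_arrival_error_le_oscillation[OF assms])
  fix s assume "s \<in> {x..x + y}"
  with assms(1,2) have "0 < f s \<and> f s \<le> f 0" "0 < f x \<and> f x \<le> f 0"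
    unfolding general_arrival_def by auto
  then show "\<bar>f s - f x\<bar> \<le> f 0"
    by linarith
qed

lemma general_arrival_lipschitz_near_0:
  assumes "general_arrival F f"
  obtains \<delta> B where "0 < \<delta>" "0 \<le> B"
    "\<And>s x. s \<in> {0..\<delta>} \<Longrightarrow> x \<in> {0..\<delta>} \<Longrightarrow> \<bar>f s - f x\<bar> \<le> B * \<bar>s - x\<bar>"
proof -
  have "\<exists>\<delta>>0. \<exists>f'. (\<forall>x\<in>{0..<\<delta>}. (f has_real_derivative f' x) (at x within {0..}))
      \<and> continuous_on {0..<\<delta>} f'"
    using assms unfolding general_arrival_def by auto
  then obtain \<delta> f' where "0 < \<delta>"
    and f_deriv: "\<And>x. x \<in> {0..<\<delta>} \<Longrightarrow> (f has_real_derivative f' x) (at x within {0..})"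
    and f'_cont: "continuous_on {0..<\<delta>} f'"
    by blast
  have "continuous_on {0..\<delta> / 2} f'"
    by (rule continuous_on_subset[OF f'_cont]) (use \<open>0 < \<delta>\<close> in auto)
  then obtain B where B: "0 \<le> B" "\<And>x. x \<in> {0..\<delta> / 2} \<Longrightarrow> norm (f' x) \<le> B"
    by (rule continuous_on_compact_bound[rotated]) auto
  have "norm (f s - f x) \<le> B * norm (s - x)" if "s \<in> {0..\<delta> / 2}" "x \<in> {0..\<delta> / 2}" for s x
  proof (rule field_differentiable_bound[of "{0..\<delta> / 2}" f f'])
    fix z assume "z \<in> {0..\<delta> / 2}"
    with \<open>0 < \<delta>\<close> have "z \<in> {0..<\<delta>}"
      by auto
    from f_deriv[OF this] show "(f has_field_derivative f' z) (at z within {0..\<delta> / 2})"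
      by (rule DERIV_subset) auto
  qed (use B that in auto)
  then have "\<bar>f s - f x\<bar> \<le> B * \<bar>s - x\<bar>" if "s \<in> {0..\<delta> / 2}" "x \<in> {0..\<delta> / 2}" for s x
    using that by simp
  moreover have "0 < \<delta> / 2"
    using \<open>0 < \<delta>\<close> by simp
  ultimately show ?thesis
    using that B(1) by blast
qed

text \<open>Near 0 the density is Lipschitz; for large steps the linear bound already suffices,
  because then \<open>y\<close> is bounded below.\<close>

lemma general_arrival_error_le_quadratic:
  assumes "general_arrival F f"
  obtains \<delta> K where "0 < \<delta>" "0 \<le> K"
    "\<And>x y. 0 \<le> x \<Longrightarrow> x \<le> \<delta> \<Longrightarrow> 0 \<le> y \<Longrightarrow> \<bar>F (x + y) - F x - f x * y\<bar> \<le> K * y\<^sup>2"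
proof -
  obtain \<delta> B where \<delta>: "0 < \<delta>" and B: "0 \<le> B"
    and lip: "\<And>s x. s \<in> {0..\<delta>} \<Longrightarrow> x \<in> {0..\<delta>} \<Longrightarrow> \<bar>f s - f x\<bar> \<le> B * \<bar>s - x\<bar>"
    using general_arrival_lipschitz_near_0[OF assms] by blast
  have f0: "0 < f 0"
    using assms unfolding general_arrival_def by auto
  define K where "K = B + f 0 / (\<delta> / 2)"
  have "\<bar>F (x + y) - F x - f x * y\<bar> \<le> K * y\<^sup>2" if xy: "0 \<le> x" "x \<le> \<delta> / 2" "0 \<le> y" for x y
  proof (cases "x + y \<le> \<delta>")
    case True
    have "\<bar>F (x + y) - F x - f x * y\<bar> \<le> (B * y) * y"
    proof (rule general_arrival_error_le_oscillation[OF assms xy(1,3)])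
      fix s assume s: "s \<in> {x..x + y}"
      with xy True have "\<bar>f s - f x\<bar> \<le> B * \<bar>s - x\<bar>"
        by (intro lip) auto
      also have "\<dots> \<le> B * y"
        using s B by (intro mult_left_mono) auto
      finally show "\<bar>f s - f x\<bar> \<le> B * y" .
    qed
    then have "\<bar>F (x + y) - F x - f x * y\<bar> \<le> B * y\<^sup>2"
      by (simp add: power2_eq_square mult_ac)
    also have "\<dots> \<le> K * y\<^sup>2"
      using \<delta> f0 unfolding K_def by (intro mult_right_mono) auto
    finally show ?thesis .
  next
    case False
    with xy have y: "\<delta> / 2 \<le> y" by simp
    have "\<bar>F (x + y) - F x - f x * y\<bar> \<le> f 0 * y"
      using general_arrival_error_le_linear[OF assms xy(1,3)] .
    also have "\<dots> = f 0 / (\<delta> / 2) * ((\<delta> / 2) * y)"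
      using \<delta> by simp
    also have "\<dots> \<le> f 0 / (\<delta> / 2) * y\<^sup>2"
      using y xy \<delta> f0 unfolding power2_eq_square by (intro mult_left_mono mult_right_mono) auto
    also have "\<dots> \<le> K * y\<^sup>2"
      unfolding K_def using B by (intro mult_right_mono) auto
    finally show ?thesis .
  qed
  moreover have "0 \<le> K"
    using B \<delta> f0 by (simp add: K_def)
  ultimately show ?thesis
    using \<delta> by (intro that[of "\<delta> / 2" K]) auto
qed

definition Dn_scale :: "real \<Rightarrow> nat \<Rightarrow> real" where
  "Dn_scale \<beta> n = (1 + \<beta> * real n powr (-1/3)) / real n"

lemma Dn_eq_scale: "Dn \<beta> S n j \<omega> = Dn_scale \<beta> n * S j \<omega>"
  by (simp add: Dn_def Dn_scale_def)

lemma Sigman_eq_scale: "Sigman \<beta> S n k \<omega> = Dn_scale \<beta> n * (\<Sum>j\<in>{1..k}. S j \<omega>)"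
  by (simp add: Sigman_def Dn_eq_scale sum_distrib_left)

lemma Sigman_eq_prev_plus_Dn:
  "1 \<le> k \<Longrightarrow> Sigman \<beta> S n k \<omega> = Sigman \<beta> S n (k - 1) \<omega> + Dn \<beta> S n k \<omega>"
  by (cases k) (simp_all add: Sigman_def)

lemma tendsto_n_Dn_scale: "(\<lambda>n. real n * Dn_scale \<beta> n) \<longlonglongrightarrow> 1"
  unfolding Dn_scale_def by real_asymp

lemma tendsto_Dn_scale: "Dn_scale \<beta> \<longlonglongrightarrow> 0"
  unfolding Dn_scale_def by real_asymp

lemma tendsto_powr_Dn_scale: "(\<lambda>n. real n powr (2/3) * Dn_scale \<beta> n) \<longlonglongrightarrow> 0"
  unfolding Dn_scale_def by real_asymp

lemma tendsto_powr_Dn_scale_square: "(\<lambda>n. real n powr (4/3) * (Dn_scale \<beta> n)\<^sup>2) \<longlonglongrightarrow> 0"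
  unfolding Dn_scale_def by real_asymp

lemma eventually_Dn_scale_nonneg: "eventually (\<lambda>n. 0 \<le> Dn_scale \<beta> n) sequentially"
proof -
  have "eventually (\<lambda>n. 0 < real n * Dn_scale \<beta> n) sequentially"
    using tendsto_n_Dn_scale by (rule order_tendstoD) simp
  then show ?thesis
    by eventually_elim (simp add: zero_less_mult_iff)
qed

locale scaled_iid_sums = prob_space M for M :: "'a measure" +
  fixes S :: "nat \<Rightarrow> 'a \<Rightarrow> real" and \<beta> :: real
  assumes S_measurable: "\<And>i. 1 \<le> i \<Longrightarrow> S i \<in> borel_measurable M"
    and indep_S: "indep_vars (\<lambda>_. borel) S {1..}"
    and distr_S: "\<And>i. 1 \<le> i \<Longrightarrow> distr M borel (S i) = distr M borel (S 1)"
    and S_nonneg: "\<And>i. 1 \<le> i \<Longrightarrow> AE \<omega> in M. 0 \<le> S i \<omega>"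
    and integrable_S1: "integrable M (S 1)"
begin

lemma integrable_comp_S_iff:
  fixes g :: "real \<Rightarrow> real"
  assumes "1 \<le> k" "g \<in> borel_measurable borel"
  shows "integrable M (\<lambda>x. g (S k x)) \<longleftrightarrow> integrable M (\<lambda>x. g (S 1 x))"
proof -
  have meas: "S k \<in> borel_measurable M" "S 1 \<in> borel_measurable M"
    using S_measurable assms(1) by auto
  show ?thesis
    using integrable_distr_eq[OF meas(1) assms(2)] integrable_distr_eq[OF meas(2) assms(2)] distr_S[OF assms(1)] by simp
qed

lemma integral_comp_S:
  fixes g :: "real \<Rightarrow> real"
  assumes "1 \<le> k" "g \<in> borel_measurable borel"
  shows "(\<integral>x. g (S k x) \<partial>M) = (\<integral>x. g (S 1 x) \<partial>M)"
proof -
  have meas: "S k \<in> borel_measurable M" "S 1 \<in> borel_measurable M"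
    using S_measurable assms(1) by auto
  show ?thesis
    using integral_distr[OF meas(1) assms(2)] integral_distr[OF meas(2) assms(2)] distr_S[OF assms(1)] by simp
qed

lemma Sigman_measurable: "Sigman \<beta> S n k \<in> borel_measurable M"
  unfolding Sigman_eq_scale using S_measurable by (auto intro!: borel_measurable_sum)

lemma AE_Sigman_mono:
  assumes "0 \<le> Dn_scale \<beta> n" "j \<le> k"
  shows "AE x in M. Sigman \<beta> S n j x \<le> Sigman \<beta> S n k x"
proof -
  have "AE x in M. \<forall>i\<in>{1..k}. 0 \<le> S i x"
    using S_nonneg by (intro AE_finite_allI) auto
  then show ?thesis
    unfolding Sigman_eq_scale
    by eventually_elim (use assms in \<open>auto intro!: mult_left_mono sum_mono2\<close>)
qed

lemma AE_Sigman_nonneg: "0 \<le> Dn_scale \<beta> n \<Longrightarrow> AE x in M. 0 \<le> Sigman \<beta> S n k x"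
  using AE_Sigman_mono[of n 0 k] by (simp add: Sigman_def)

lemma indep_var_Sigman_S:
  assumes "1 \<le> k"
  shows "indep_var borel (Sigman \<beta> S n (k - 1)) borel (S k)"
proof -
  let ?S_on = "\<lambda>I \<omega>. restrict (\<lambda>i. S i \<omega>) I"
  have "indep_vars (\<lambda>_. borel) S ({1..k - 1} \<union> {k})"
    using assms by (intro indep_vars_subset[OF indep_S]) auto
  then have "indep_var borel ((\<lambda>s. Dn_scale \<beta> n * (\<Sum>i\<in>{1..k - 1}. s i)) \<circ> ?S_on {1..k - 1})
      borel ((\<lambda>s. s k) \<circ> ?S_on {k})"
    by (intro indep_var_compose[OF indep_var_restrict]) auto
  moreover have "(\<Sum>i\<in>{1..k - 1}. ?S_on {1..k - 1} \<omega> i) = (\<Sum>i\<in>{1..k - 1}. S i \<omega>)" for \<omega>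
    by (rule sum.cong) auto
  ultimately show ?thesis
    by (simp add: comp_def Sigman_eq_scale[abs_def])
qed

lemma integral_Sigman:
  "integrable M (Sigman \<beta> S n k)"
  "(\<integral>x. Sigman \<beta> S n k x \<partial>M) = Dn_scale \<beta> n * (real k * (\<integral>x. S 1 x \<partial>M))"
proof -
  have S_j: "integrable M (S j)" "(\<integral>x. S j x \<partial>M) = (\<integral>x. S 1 x \<partial>M)" if "j \<in> {1..k}" for j
  proof -
    from that have j: "1 \<le> j" by simp
    show "integrable M (S j)"
      using integrable_comp_S_iff[OF j, of "\<lambda>x. x"] integrable_S1 by simp
    show "(\<integral>x. S j x \<partial>M) = (\<integral>x. S 1 x \<partial>M)"
      using integral_comp_S[OF j, of "\<lambda>x. x"] by simp
  qed
  show "integrable M (Sigman \<beta> S n k)"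
    unfolding Sigman_eq_scale[abs_def] using S_j(1)
    by (intro integrable_mult_right Bochner_Integration.integrable_sum) auto
  have "(\<integral>x. Sigman \<beta> S n k x \<partial>M) = Dn_scale \<beta> n * (\<Sum>j\<in>{1..k}. \<integral>x. S j x \<partial>M)"
    unfolding Sigman_eq_scale using S_j(1)
    by (simp only: integral_mult_right_zero Bochner_Integration.integral_sum)
  also have "\<dots> = Dn_scale \<beta> n * (\<Sum>j\<in>{1..k}. \<integral>x. S 1 x \<partial>M)"
    by (rule arg_cong[where f="(*) _"], rule sum.cong[OF refl S_j(2)])
  also have "\<dots> = Dn_scale \<beta> n * (real k * (\<integral>x. S 1 x \<partial>M))"
    by simp
  finally show "(\<integral>x. Sigman \<beta> S n k x \<partial>M) = Dn_scale \<beta> n * (real k * (\<integral>x. S 1 x \<partial>M))" .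
qed

lemma measure_Sigman_ge_le:
  assumes "0 \<le> Dn_scale \<beta> n" "0 < \<delta>"
  shows "measure M {x \<in> space M. \<delta> \<le> Sigman \<beta> S n k x}
    \<le> Dn_scale \<beta> n * (real k * (\<integral>x. S 1 x \<partial>M)) / \<delta>"
  using integral_Markov_inequality_measure[OF integral_Sigman(1) sets.top AE_Sigman_nonneg assms(2)]
    assms integral_Sigman(2) by simp

lemma tendsto_measure_Sigman_ge:
  assumes "0 < \<delta>"
  shows "(\<lambda>n. measure M {x \<in> space M. \<delta> \<le> Sigman \<beta> S n (nat \<lfloor>t * real n powr (2/3)\<rfloor>) x})
    \<longlonglongrightarrow> 0"
proof (rule tendsto_sandwich[OF _ _ tendsto_const])
  let ?w = "\<lambda>n. real n powr (2/3) * Dn_scale \<beta> n * (\<bar>t\<bar> * (\<integral>x. S 1 x \<partial>M) / \<delta>)"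
  have E_nonneg: "0 \<le> (\<integral>x. S 1 x \<partial>M)"
    using S_nonneg[of 1] by (intro integral_nonneg_AE) auto
  show "?w \<longlonglongrightarrow> 0"
    by (rule tendsto_mult_left_zero[OF tendsto_powr_Dn_scale])
  show "eventually (\<lambda>n. measure M {x \<in> space M. \<delta> \<le> Sigman \<beta> S n (nat \<lfloor>t * real n powr (2/3)\<rfloor>) x}
      \<le> ?w n) sequentially"
    using eventually_Dn_scale_nonneg[of \<beta>]
  proof eventually_elim
    case (elim n)
    have "real (nat \<lfloor>t * real n powr (2/3)\<rfloor>) \<le> max 0 (t * real n powr (2/3))"
      by (cases "0 \<le> t * real n powr (2/3)") auto
    also have "\<dots> \<le> real n powr (2/3) * \<bar>t\<bar>"
      by (auto simp: mult.commute intro: mult_right_mono)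
    finally have "real (nat \<lfloor>t * real n powr (2/3)\<rfloor>) \<le> real n powr (2/3) * \<bar>t\<bar>" .
    then have "Dn_scale \<beta> n * (real (nat \<lfloor>t * real n powr (2/3)\<rfloor>) * (\<integral>x. S 1 x \<partial>M)) / \<delta>
        \<le> Dn_scale \<beta> n * (real n powr (2/3) * \<bar>t\<bar> * (\<integral>x. S 1 x \<partial>M)) / \<delta>"
      using elim E_nonneg assms by (intro divide_right_mono mult_left_mono mult_right_mono) auto
    also have "\<dots> = ?w n"
      by (simp add: mult_ac)
    finally show ?case
      using measure_Sigman_ge_le[OF elim assms, of "nat \<lfloor>t * real n powr (2/3)\<rfloor>"] by linarith
  qed
qed simp

lemma AE_cond_exp_given_Sigman_le:
  assumes k: "1 \<le> k" and h: "\<And>x. 0 \<le> h x" "integrable M H" "AE x in M. h x \<le> H x"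
    and G: "G \<in> borel_measurable borel" "integrable M (\<lambda>x. G (S 1 x))" "\<And>s. 0 \<le> s \<Longrightarrow> 0 \<le> G s"
    and h_le_G: "AE x in M. Sigman \<beta> S n (k - 1) x \<le> \<delta> \<longrightarrow> h x \<le> G (S k x)"
  shows "AE x in M. 0 \<le> cond_exp_given M (Sigman \<beta> S n (k - 1)) h x
    \<and> (Sigman \<beta> S n (k - 1) x \<le> \<delta> \<longrightarrow>
         cond_exp_given M (Sigman \<beta> S n (k - 1)) h x \<le> (\<integral>x. G (S 1 x) \<partial>M))"
proof -
  let ?F = "vimage_algebra (space M) (Sigman \<beta> S n (k - 1)) borel"
  interpret sigma_finite_subalgebra M ?F
    by (rule sigma_finite_subalgebra_vimage_algebra[OF Sigman_measurable])
  have G_k: "integrable M (\<lambda>x. G (S k x))"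
    using integrable_comp_S_iff[OF k G(1)] G(2) by simp
  have "Sigman \<beta> S n (k - 1) -` {..\<delta>} \<inter> space M \<in> sets ?F"
    by (rule in_vimage_algebra) simp
  moreover have "AE x in M. 0 \<le> G (S k x)"
    using S_nonneg[OF k] by eventually_elim (rule G(3))
  ultimately have "AE x in M. 0 \<le> real_cond_exp M ?F h x
      \<and> (x \<in> Sigman \<beta> S n (k - 1) -` {..\<delta>} \<inter> space M
         \<longrightarrow> real_cond_exp M ?F h x \<le> real_cond_exp M ?F (\<lambda>x. G (S k x)) x)"
    using h h_le_G G_k by (intro real_cond_exp_mono_on) auto
  moreover have "AE x in M. real_cond_exp M ?F (\<lambda>x. G (S k x)) x = (\<integral>x. G (S k x) \<partial>M)"
    by (rule real_cond_exp_indep_var[OF indep_var_Sigman_S[OF k] G(1) G_k])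
  moreover have "AE x in M. x \<in> space M"
    by (rule AE_space)
  ultimately show ?thesis
    unfolding cond_exp_given_def integral_comp_S[OF k G(1)] by eventually_elim auto
qed

lemma measure_cond_exp_given_exceeds_le:
  assumes "0 \<le> Dn_scale \<beta> n" "0 \<le> a" "a * (\<integral>x. G (S 1 x) \<partial>M) < \<epsilon>"
    and bound: "\<And>k. 1 \<le> k \<Longrightarrow> AE x in M. 0 \<le> cond_exp_given M (Sigman \<beta> S n (k - 1)) (h k) x
      \<and> (Sigman \<beta> S n (k - 1) x \<le> \<delta> \<longrightarrow>
         cond_exp_given M (Sigman \<beta> S n (k - 1)) (h k) x \<le> (\<integral>x. G (S 1 x) \<partial>M))"
  shows "measure M {\<omega> \<in> space M. \<exists>k. 1 \<le> k \<and> real k \<le> T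
      \<and> \<epsilon> < \<bar>a * cond_exp_given M (Sigman \<beta> S n (k - 1)) (h k) \<omega>\<bar>}
    \<le> measure M {\<omega> \<in> space M. \<delta> \<le> Sigman \<beta> S n (nat \<lfloor>T\<rfloor>) \<omega>}"
proof (rule finite_measure_mono_AE)
  let ?K = "nat \<lfloor>T\<rfloor>"
  have "AE x in M. \<forall>k\<in>{1..?K}. (0 \<le> cond_exp_given M (Sigman \<beta> S n (k - 1)) (h k) x
      \<and> (Sigman \<beta> S n (k - 1) x \<le> \<delta> \<longrightarrow>
         cond_exp_given M (Sigman \<beta> S n (k - 1)) (h k) x \<le> (\<integral>x. G (S 1 x) \<partial>M)))
      \<and> Sigman \<beta> S n (k - 1) x \<le> Sigman \<beta> S n ?K x"
    using bound AE_Sigman_mono[OF assms(1)] by (intro AE_finite_allI) auto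
  then show "AE x in M. x \<in> {\<omega> \<in> space M. \<exists>k. 1 \<le> k \<and> real k \<le> T
      \<and> \<epsilon> < \<bar>a * cond_exp_given M (Sigman \<beta> S n (k - 1)) (h k) \<omega>\<bar>}
    \<longrightarrow> x \<in> {\<omega> \<in> space M. \<delta> \<le> Sigman \<beta> S n ?K \<omega>}"
  proof eventually_elim
    case (elim x)
    show ?case
    proof (rule impI, rule ccontr)
      assume "x \<in> {\<omega> \<in> space M. \<exists>k. 1 \<le> k \<and> real k \<le> T
        \<and> \<epsilon> < \<bar>a * cond_exp_given M (Sigman \<beta> S n (k - 1)) (h k) \<omega>\<bar>}"
        and "x \<notin> {\<omega> \<in> space M. \<delta> \<le> Sigman \<beta> S n ?K \<omega>}"
      then obtain k where k: "1 \<le> k" "k \<le> ?K" and large: "\<epsilon> < \<bar>a * cond_exp_given M (Sigman \<beta> S n (k - 1)) (h k) x\<bar>"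
        and small: "Sigman \<beta> S n ?K x < \<delta>"
        by (auto simp: le_nat_floor)
      with elim have "0 \<le> cond_exp_given M (Sigman \<beta> S n (k - 1)) (h k) x"
        "cond_exp_given M (Sigman \<beta> S n (k - 1)) (h k) x \<le> (\<integral>x. G (S 1 x) \<partial>M)"
        by fastforce+
      then have "\<bar>a * cond_exp_given M (Sigman \<beta> S n (k - 1)) (h k) x\<bar> \<le> a * (\<integral>x. G (S 1 x) \<partial>M)"
        using assms(2) by (simp add: abs_mult mult_left_mono)
      with large assms(3) show False
        by simp
    qed
  qed
qed (use Sigman_measurable in measurable)

lemma sup_to_zero_in_prob_cond_exp_given:
  assumes "0 < \<delta>" "\<And>n k x. 0 \<le> h n k x" "\<And>n. 0 \<le> a n"
    and H: "\<And>n. H n \<in> borel_measurable borel" "\<And>n. integrable M (\<lambda>x. H n (S 1 x))"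
    and G: "\<And>n. G n \<in> borel_measurable borel" "\<And>n. integrable M (\<lambda>x. G n (S 1 x))"
      "\<And>n s. 0 \<le> s \<Longrightarrow> 0 \<le> G n s"
    and bound: "eventually (\<lambda>n. \<forall>k\<ge>1. \<forall>x. 0 \<le> Sigman \<beta> S n (k - 1) x \<longrightarrow> 0 \<le> Dn \<beta> S n k x \<longrightarrow>
        h n k x \<le> H n (S k x) \<and> (Sigman \<beta> S n (k - 1) x \<le> \<delta> \<longrightarrow> h n k x \<le> G n (S k x))) sequentially"
    and lim: "(\<lambda>n. a n * (\<integral>x. G n (S 1 x) \<partial>M)) \<longlonglongrightarrow> 0"
  shows "sup_to_zero_in_prob M t (\<lambda>n k \<omega>. a n * cond_exp_given M (Sigman \<beta> S n (k - 1)) (h n k) \<omega>)"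
  unfolding sup_to_zero_in_prob_def
proof (intro allI impI)
  fix \<epsilon> :: real
  assume "0 < \<epsilon>"
  let ?T = "\<lambda>n. t * real n powr (2/3)"
  have "eventually (\<lambda>n. measure M {\<omega> \<in> space M. \<exists>k. 1 \<le> k \<and> real k \<le> ?T n
      \<and> \<epsilon> < \<bar>a n * cond_exp_given M (Sigman \<beta> S n (k - 1)) (h n k) \<omega>\<bar>}
    \<le> measure M {\<omega> \<in> space M. \<delta> \<le> Sigman \<beta> S n (nat \<lfloor>?T n\<rfloor>) \<omega>}) sequentially"
    using bound eventually_Dn_scale_nonneg[of \<beta>] order_tendstoD(2)[OF lim \<open>0 < \<epsilon>\<close>]
  proof eventually_elim
    case (elim n)
    have "AE x in M. 0 \<le> cond_exp_given M (Sigman \<beta> S n (k - 1)) (h n k) x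
      \<and> (Sigman \<beta> S n (k - 1) x \<le> \<delta> \<longrightarrow> cond_exp_given M (Sigman \<beta> S n (k - 1)) (h n k) x
           \<le> (\<integral>x. G n (S 1 x) \<partial>M))" if k: "1 \<le> k" for k
    proof (rule AE_cond_exp_given_Sigman_le[OF k assms(2) _ _ G])
      show "integrable M (\<lambda>x. H n (S k x))"
        using integrable_comp_S_iff[OF k H(1)] H(2) by simp
      have "AE x in M. 0 \<le> Sigman \<beta> S n (k - 1) x \<and> 0 \<le> Dn \<beta> S n k x"
        using AE_Sigman_nonneg[OF elim(2)] S_nonneg[OF k] by eventually_elim (simp add: Dn_eq_scale elim(2))
      then show "AE x in M. h n k x \<le> H n (S k x)"
        "AE x in M. Sigman \<beta> S n (k - 1) x \<le> \<delta> \<longrightarrow> h n k x \<le> G n (S k x)"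
        by (eventually_elim, use elim(1) k in blast)+
    qed
    then show ?case
      by (rule measure_cond_exp_given_exceeds_le[OF elim(2) assms(3) elim(3)])
  qed
  then show "(\<lambda>n. measure M {\<omega> \<in> space M. \<exists>k. 1 \<le> k \<and> real k \<le> ?T n
      \<and> \<bar>a n * cond_exp_given M (Sigman \<beta> S n (k - 1)) (h n k) \<omega>\<bar> > \<epsilon>}) \<longlonglongrightarrow> 0"
    by (intro tendsto_sandwich[OF _ _ tendsto_const tendsto_measure_Sigman_ge[OF assms(1)]]) auto
qed

end

text \<open>\<open>\<delta>\<close> and \<open>K\<close> are the radius and constant provided by \<open>general_arrival_error_le_quadratic\<close>.\<close>

locale general_arrival_steps = scaled_iid_sums +
  fixes F f :: "real \<Rightarrow> real" and \<delta> K :: real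
  assumes general_arrival: "general_arrival F f"
    and square_integrable_S1: "integrable M (\<lambda>\<omega>. (S 1 \<omega>)\<^sup>2)"
    and radius_pos: "0 < \<delta>" and K_nonneg: "0 \<le> K"
    and error_le_quadratic:
      "\<And>x y. 0 \<le> x \<Longrightarrow> x \<le> \<delta> \<Longrightarrow> 0 \<le> y \<Longrightarrow> \<bar>F (x + y) - F x - f x * y\<bar> \<le> K * y\<^sup>2"
begin

abbreviation step_error :: "nat \<Rightarrow> nat \<Rightarrow> 'a \<Rightarrow> real" where
  "step_error n k x \<equiv> F (Sigman \<beta> S n k x) - F (Sigman \<beta> S n (k - 1) x)
    - f (Sigman \<beta> S n (k - 1) x) * Dn \<beta> S n k x"

abbreviation error_cap :: "real \<Rightarrow> real" where
  "error_cap d \<equiv> min (f 0 * d\<^sup>2) (K * \<bar>d\<bar> ^ 3)"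

lemma f_0_nonneg: "0 \<le> f 0"
  using general_arrival unfolding general_arrival_def by (auto intro: less_imp_le)

lemma step_error_bounds:
  assumes k: "1 \<le> k" and Sigma_nonneg: "0 \<le> Sigman \<beta> S n (k - 1) x" and D_nonneg: "0 \<le> Dn \<beta> S n k x"
  defines "d \<equiv> Dn \<beta> S n k x" and "e \<equiv> step_error n k x"
  shows "\<bar>e\<bar> \<le> f 0 * d" "\<bar>d * e\<bar> \<le> f 0 * d\<^sup>2" "\<bar>e\<bar>\<^sup>2 \<le> (f 0)\<^sup>2 * d\<^sup>2"
    and "Sigman \<beta> S n (k - 1) x \<le> \<delta> \<Longrightarrow> \<bar>e\<bar> \<le> K * d\<^sup>2"
    and "Sigman \<beta> S n (k - 1) x \<le> \<delta> \<Longrightarrow> \<bar>d * e\<bar> \<le> error_cap d"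
    and "Sigman \<beta> S n (k - 1) x \<le> \<delta> \<Longrightarrow> \<bar>e\<bar>\<^sup>2 \<le> f 0 * error_cap d"
proof -
  have e_eq: "e = F (Sigman \<beta> S n (k - 1) x + d) - F (Sigman \<beta> S n (k - 1) x) - f (Sigman \<beta> S n (k - 1) x) * d"
    unfolding d_def e_def Sigman_eq_prev_plus_Dn[OF k] ..
  show lin: "\<bar>e\<bar> \<le> f 0 * d"
    unfolding e_eq using general_arrival_error_le_linear[OF general_arrival Sigma_nonneg] D_nonneg d_def by blast
  have de: "\<bar>d * e\<bar> = d * \<bar>e\<bar>"
    using D_nonneg by (simp add: d_def abs_mult)
  have "d * \<bar>e\<bar> \<le> d * (f 0 * d)"
    using lin D_nonneg by (intro mult_left_mono) (simp_all add: d_def)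
  then show de_lin: "\<bar>d * e\<bar> \<le> f 0 * d\<^sup>2"
    unfolding de by (simp add: power2_eq_square mult_ac)
  have "\<bar>e\<bar> * \<bar>e\<bar> \<le> \<bar>e\<bar> * (f 0 * d)"
    using lin by (intro mult_left_mono) simp_all
  then have ee_de: "\<bar>e\<bar>\<^sup>2 \<le> f 0 * \<bar>d * e\<bar>"
    unfolding de by (simp add: power2_eq_square mult_ac)
  show "\<bar>e\<bar>\<^sup>2 \<le> (f 0)\<^sup>2 * d\<^sup>2"
    using power_mono[OF lin, of 2] by (simp add: power_mult_distrib)
  assume near_0: "Sigman \<beta> S n (k - 1) x \<le> \<delta>"
  show quad: "\<bar>e\<bar> \<le> K * d\<^sup>2"
    unfolding e_eq using error_le_quadratic[OF Sigma_nonneg near_0] D_nonneg d_def by blast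
  have "\<bar>d * e\<bar> \<le> K * \<bar>d\<bar> ^ 3"
    using mult_left_mono[OF quad D_nonneg[folded d_def]] D_nonneg[folded d_def]
    unfolding de by (simp add: power2_eq_square power3_eq_cube mult_ac)
  with de_lin show cap: "\<bar>d * e\<bar> \<le> error_cap d"
    by simp
  show "\<bar>e\<bar>\<^sup>2 \<le> f 0 * error_cap d"
    using order_trans[OF ee_de mult_left_mono[OF cap f_0_nonneg]] .
qed

lemma tendsto_integral_error_cap:
  "(\<lambda>n. real n powr 2 * (\<integral>x. error_cap (Dn_scale \<beta> n * S 1 x) \<partial>M)) \<longlonglongrightarrow> 0"
proof -
  let ?c = "Dn_scale \<beta>"
  have cap_eq: "error_cap (c * s) = c\<^sup>2 * min (f 0 * s\<^sup>2) (K * \<bar>c\<bar> * \<bar>s\<bar> ^ 3)" for c s :: real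
    by (simp add: min_mult_distrib_left power_mult_distrib abs_mult power2_eq_square power3_eq_cube mult_ac)
  have "real n powr 2 * (\<integral>x. error_cap (?c n * S 1 x) \<partial>M)
      = (real n * ?c n)\<^sup>2 * (\<integral>x. min (f 0 * (S 1 x)\<^sup>2) (K * \<bar>?c n\<bar> * \<bar>S 1 x\<bar> ^ 3) \<partial>M)" for n
  proof -
    have "(\<integral>x. error_cap (?c n * S 1 x) \<partial>M)
        = (?c n)\<^sup>2 * (\<integral>x. min (f 0 * (S 1 x)\<^sup>2) (K * \<bar>?c n\<bar> * \<bar>S 1 x\<bar> ^ 3) \<partial>M)"
      by (simp only: cap_eq integral_mult_right_zero)
    moreover have "real n powr 2 = (real n)\<^sup>2"
      using powr_realpow'[of "real n" 2] by (cases "n = 0") simp_all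
    ultimately show ?thesis
      by (simp add: power_mult_distrib)
  qed
  moreover have "(\<lambda>n. (real n * ?c n)\<^sup>2 * (\<integral>x. min (f 0 * (S 1 x)\<^sup>2) (K * \<bar>?c n\<bar> * \<bar>S 1 x\<bar> ^ 3) \<partial>M))
      \<longlonglongrightarrow> 1\<^sup>2 * 0"
  proof (intro tendsto_mult tendsto_power tendsto_n_Dn_scale tendsto_integral_min_square_cube f_0_nonneg)
    show "S 1 \<in> borel_measurable M"
      using S_measurable by simp
    show "(\<lambda>n. K * \<bar>?c n\<bar>) \<longlonglongrightarrow> 0"
      by (intro tendsto_mult_right_zero tendsto_rabs_zero tendsto_Dn_scale)
  qed (use square_integrable_S1 K_nonneg in auto)
  ultimately show ?thesis
    by simp
qed

lemma sup_to_zero_in_prob_abs_step_error: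
  "sup_to_zero_in_prob M t (\<lambda>n k \<omega>. real n powr (4/3) *
     cond_exp_given M (Sigman \<beta> S n (k - 1)) (\<lambda>x. \<bar>step_error n k x\<bar>) \<omega>)"
proof (rule sup_to_zero_in_prob_cond_exp_given[OF radius_pos,
      where H="\<lambda>n s. f 0 * (Dn_scale \<beta> n * s)" and G="\<lambda>n s. K * (Dn_scale \<beta> n * s)\<^sup>2"])
  show "eventually (\<lambda>n. \<forall>k\<ge>1. \<forall>x. 0 \<le> Sigman \<beta> S n (k - 1) x \<longrightarrow> 0 \<le> Dn \<beta> S n k x \<longrightarrow>
      \<bar>step_error n k x\<bar> \<le> f 0 * (Dn_scale \<beta> n * S k x)
      \<and> (Sigman \<beta> S n (k - 1) x \<le> \<delta> \<longrightarrow> \<bar>step_error n k x\<bar> \<le> K * (Dn_scale \<beta> n * S k x)\<^sup>2)) sequentially"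
    using step_error_bounds(1,4) by (simp add: Dn_eq_scale)
  have "(\<lambda>n. real n powr (4/3) * (Dn_scale \<beta> n)\<^sup>2 * (K * (\<integral>x. (S 1 x)\<^sup>2 \<partial>M))) \<longlonglongrightarrow> 0"
    by (rule tendsto_mult_left_zero[OF tendsto_powr_Dn_scale_square])
  then show "(\<lambda>n. real n powr (4/3) * (\<integral>x. K * (Dn_scale \<beta> n * S 1 x)\<^sup>2 \<partial>M)) \<longlonglongrightarrow> 0"
    by (simp add: power_mult_distrib mult_ac)
qed (use integrable_S1 square_integrable_S1 K_nonneg in \<open>auto simp: power_mult_distrib\<close>)

lemma integrable_error_cap: "integrable M (\<lambda>x. error_cap (c * S 1 x))"
proof (rule Bochner_Integration.integrable_bound)
  show "integrable M (\<lambda>x. f 0 * (c * S 1 x)\<^sup>2)"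
    using square_integrable_S1 by (simp add: power_mult_distrib)
  show "(\<lambda>x. error_cap (c * S 1 x)) \<in> borel_measurable M"
    using S_measurable[of 1] by measurable
  show "AE x in M. norm (error_cap (c * S 1 x)) \<le> norm (f 0 * (c * S 1 x)\<^sup>2)"
    using f_0_nonneg K_nonneg by auto
qed

lemma sup_to_zero_in_prob_abs_Dn_step_error:
  "sup_to_zero_in_prob M t (\<lambda>n k \<omega>. real n powr 2 *
     cond_exp_given M (Sigman \<beta> S n (k - 1)) (\<lambda>x. \<bar>Dn \<beta> S n k x * step_error n k x\<bar>) \<omega>)"
proof (rule sup_to_zero_in_prob_cond_exp_given[OF radius_pos,
      where H="\<lambda>n s. f 0 * (Dn_scale \<beta> n * s)\<^sup>2" and G="\<lambda>n s. error_cap (Dn_scale \<beta> n * s)"])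
  show "eventually (\<lambda>n. \<forall>k\<ge>1. \<forall>x. 0 \<le> Sigman \<beta> S n (k - 1) x \<longrightarrow> 0 \<le> Dn \<beta> S n k x \<longrightarrow>
      \<bar>Dn \<beta> S n k x * step_error n k x\<bar> \<le> f 0 * (Dn_scale \<beta> n * S k x)\<^sup>2
      \<and> (Sigman \<beta> S n (k - 1) x \<le> \<delta> \<longrightarrow>
           \<bar>Dn \<beta> S n k x * step_error n k x\<bar> \<le> error_cap (Dn_scale \<beta> n * S k x))) sequentially"
    using step_error_bounds(2,5) by (simp add: Dn_eq_scale)
qed (use tendsto_integral_error_cap integrable_error_cap square_integrable_S1 f_0_nonneg K_nonneg
     in \<open>auto simp: power_mult_distrib\<close>)

lemma sup_to_zero_in_prob_square_step_error:
  "sup_to_zero_in_prob M t (\<lambda>n k \<omega>. real n powr 2 *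
     cond_exp_given M (Sigman \<beta> S n (k - 1)) (\<lambda>x. \<bar>step_error n k x\<bar>\<^sup>2) \<omega>)"
proof (rule sup_to_zero_in_prob_cond_exp_given[OF radius_pos,
      where H="\<lambda>n s. (f 0)\<^sup>2 * (Dn_scale \<beta> n * s)\<^sup>2" and G="\<lambda>n s. f 0 * error_cap (Dn_scale \<beta> n * s)"])
  show "eventually (\<lambda>n. \<forall>k\<ge>1. \<forall>x. 0 \<le> Sigman \<beta> S n (k - 1) x \<longrightarrow> 0 \<le> Dn \<beta> S n k x \<longrightarrow>
      \<bar>step_error n k x\<bar>\<^sup>2 \<le> (f 0)\<^sup>2 * (Dn_scale \<beta> n * S k x)\<^sup>2
      \<and> (Sigman \<beta> S n (k - 1) x \<le> \<delta> \<longrightarrow>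
           \<bar>step_error n k x\<bar>\<^sup>2 \<le> f 0 * error_cap (Dn_scale \<beta> n * S k x))) sequentially"
    using step_error_bounds(3,6) by (simp add: Dn_eq_scale)
  show "(\<lambda>n. real n powr 2 * (\<integral>x. f 0 * error_cap (Dn_scale \<beta> n * S 1 x) \<partial>M)) \<longlonglongrightarrow> 0"
    using tendsto_mult_right_zero[OF tendsto_integral_error_cap, of "f 0"] by (simp add: mult_ac)
qed (use integrable_error_cap square_integrable_S1 f_0_nonneg K_nonneg
     in \<open>auto simp: power_mult_distrib\<close>)

end

theorem mainTheorem12:
  fixes M :: "'a measure" and S :: "nat \<Rightarrow> 'a \<Rightarrow> real"
    and F f :: "real \<Rightarrow> real" and \<beta> t :: real
  assumes "prob_space M"
    and "general_arrival F f"
    and "\<And>i. i \<ge> 1 \<Longrightarrow> S i \<in> borel_measurable M"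
    and "prob_space.indep_vars M (\<lambda>_. borel) S {1..}"
    and "\<And>i. i \<ge> 1 \<Longrightarrow> distr M borel (S i) = distr M borel (S 1)"
    and "\<And>i. i \<ge> 1 \<Longrightarrow> AE \<omega> in M. S i \<omega> \<ge> 0"
    and "integrable M (\<lambda>\<omega>. (S 1 \<omega>)\<^sup>2)"
    and "t > 0"
  shows
    "sup_to_zero_in_prob M t (\<lambda>n k \<omega>. real n powr (4/3) *
        cond_exp_given M (Sigman \<beta> S n (k - 1))
          (\<lambda>x. \<bar>F (Sigman \<beta> S n k x) - F (Sigman \<beta> S n (k - 1) x)
                 - f (Sigman \<beta> S n (k - 1) x) * Dn \<beta> S n k x\<bar>) \<omega>)
     \<and> sup_to_zero_in_prob M t (\<lambda>n k \<omega>. real n powr 2 *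
        cond_exp_given M (Sigman \<beta> S n (k - 1))
          (\<lambda>x. \<bar>Dn \<beta> S n k x * (F (Sigman \<beta> S n k x) - F (Sigman \<beta> S n (k - 1) x)
                 - f (Sigman \<beta> S n (k - 1) x) * Dn \<beta> S n k x)\<bar>) \<omega>)
     \<and> sup_to_zero_in_prob M t (\<lambda>n k \<omega>. real n powr 2 *
        cond_exp_given M (Sigman \<beta> S n (k - 1))
          (\<lambda>x. \<bar>F (Sigman \<beta> S n k x) - F (Sigman \<beta> S n (k - 1) x)
                 - f (Sigman \<beta> S n (k - 1) x) * Dn \<beta> S n k x\<bar>\<^sup>2) \<omega>)"
proof -
  interpret prob_space M
    by fact
  obtain \<delta> K where "0 < \<delta>" "0 \<le> K"
    and "\<And>x y. 0 \<le> x \<Longrightarrow> x \<le> \<delta> \<Longrightarrow> 0 \<le> y \<Longrightarrow> \<bar>F (x + y) - F x - f x * y\<bar> \<le> K * y\<^sup>2"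
    using general_arrival_error_le_quadratic[OF assms(2)] by blast
  moreover have "integrable M (S 1)"
    using assms(3) by (intro square_integrable_imp_integrable[OF _ assms(7)]) simp
  ultimately interpret general_arrival_steps M S \<beta> F f \<delta> K
    using assms(2-7) by unfold_locales
  show ?thesis
    using sup_to_zero_in_prob_abs_step_error sup_to_zero_in_prob_abs_Dn_step_error
      sup_to_zero_in_prob_square_step_error by blast
qed

end
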